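(* In the setting of the context, under (A1) and (A2), the piecewise constant discrete derivatives $\tilde w^n_x=(\tilde v^n_x,\tilde u^n_x)$ satisfy $$\|w^n_x-\tilde w^n_x\|_{L^2}=O(\varepsilon^2\Delta x),$$ where $w^n_x=(v_x(\cdot,t^n),u_x(\cdot,t^n))$ is the exact derivative.
   Context: $\Omega=[0,1]$; $(v,u)$ solves $v_t-u_x=0$, $u_t-\varepsilon^{-2}v_x=g$ on $\Omega\times\mathbb{R}^+$ with $v=0$ on $\partial\Omega$, $0<\varepsilon<1$. Uniform mesh $\Omega_i=[x_i,x_{i+1}]$, $i=1,\dots,N_x$, width $\Delta x$, midpoints $\bar x_i$; $t^n=n\Delta t$; $v_i^n=v(\bar x_i,t^n)$, $u_i^n=u(\bar x_i,t^n)$. On $\Omega_i$: $\tilde v^n_x=\frac1{2\Delta x}\big(v^n_{i+1}-v^n_{i-1}+\frac{\Delta x}{\Delta t}(u^n_{i+1}+u^n_{i-1}-2u^n_i)\big)$, $\tilde u^n_x=\frac1{2\Delta x}\big(u^n_{i+1}-u^n_{i-1}+\frac{\Delta x}{\Delta t}(v^n_{i+1}+v^n_{i-1}-2v^n_i)\big)$. (A1) $u,v$ sufficiently smooth with $v=\varepsilon^2v^{(2)}+O(\varepsilon^3)$, $u_x=\varepsilon^2u^{(2)}_x+O(\varepsilon^3)$ in the norm $\|\varphi\|_{C^1}=\|\varphi\|_\infty+\|\nabla_{x,t}\varphi\|_\infty$, with $\varepsilon$-independent smooth $v^{(2)},u^{(2)}$. (A2) $\Delta t=\widehat{\mathrm{CFL}}\,\Delta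 x$ with fixed $0<\widehat{\mathrm{CFL}}<1$. $O(\cdot)$: bounded by a constant independent of $\varepsilon,\Delta t,\Delta x$ times the expression. *)

theory Defs
  imports "HOL-Analysis.Analysis"
begin

definition pdx :: "(real \<Rightarrow> real \<Rightarrow> real) \<Rightarrow> real \<Rightarrow> real \<Rightarrow> real" where
  "pdx f x t = deriv (\<lambda>y. f y t) x"

definition pdt :: "(real \<Rightarrow> real \<Rightarrow> real) \<Rightarrow> real \<Rightarrow> real \<Rightarrow> real" where
  "pdt f x t = deriv (\<lambda>s. f x s) t"

definition C1fun :: "(real \<Rightarrow> real \<Rightarrow> real) \<Rightarrow> bool" where
  "C1fun f \<longleftrightarrow>
     (\<forall>x t. ((\<lambda>p. f (fst p) (snd p)) has_derivative
              (\<lambda>h. pdx f x t * fst h + pdt f x t * snd h)) (at (x, t))) \<and>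
     continuous_on UNIV (\<lambda>p. pdx f (fst p) (snd p)) \<and>
     continuous_on UNIV (\<lambda>p. pdt f (fst p) (snd p))"

definition C2fun :: "(real \<Rightarrow> real \<Rightarrow> real) \<Rightarrow> bool" where
  "C2fun f \<longleftrightarrow> C1fun f \<and> C1fun (pdx f) \<and> C1fun (pdt f)"

definition Dom :: "(real \<times> real) set" where
  "Dom = {0..1} \<times> {0..}"

text \<open>\<open>\<parallel>f\<parallel>_{C^1} = \<parallel>f\<parallel>_\<infinity> + \<parallel>\<nabla>f\<parallel>_\<infinity> \<le> M\<close> on \<Omega> \<times> R+.\<close>
definition C1norm_le :: "(real \<Rightarrow> real \<Rightarrow> real) \<Rightarrow> real \<Rightarrow> bool" where
  "C1norm_le f M \<longleftrightarrow> (\<exists>A B. A + B \<le> M \<and>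
     (\<forall>(x, t) \<in> Dom. \<bar>f x t\<bar> \<le> A \<and> sqrt ((pdx f x t)\<^sup>2 + (pdt f x t)\<^sup>2) \<le> B))"

text \<open>Uniform mesh of [0,1] with Nx cells; cell i = [x_i, x_{i+1}], x_i = (i-1) dx, i = 1..Nx.\<close>
definition mesh_dx :: "nat \<Rightarrow> real" where
  "mesh_dx Nx = 1 / real Nx"

definition xbar :: "nat \<Rightarrow> nat \<Rightarrow> real" where
  "xbar Nx i = (real i - 1/2) * mesh_dx Nx"

text \<open>Cell averages (midpoint values) with ghost cells i = 0 and i = Nx+1 given by
  reflection at the wall: v odd (v = 0 on the boundary), u even.\<close>
definition cell_odd :: "(real \<Rightarrow> real \<Rightarrow> real) \<Rightarrow> nat \<Rightarrow> real \<Rightarrow> nat \<Rightarrow> real" where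
  "cell_odd f Nx t i =
     (if i = 0 then - f (xbar Nx 1) t
      else if Nx < i then - f (xbar Nx Nx) t
      else f (xbar Nx i) t)"

definition cell_even :: "(real \<Rightarrow> real \<Rightarrow> real) \<Rightarrow> nat \<Rightarrow> real \<Rightarrow> nat \<Rightarrow> real" where
  "cell_even f Nx t i =
     (if i = 0 then f (xbar Nx 1) t
      else if Nx < i then f (xbar Nx Nx) t
      else f (xbar Nx i) t)"

definition vx_tilde :: "(real \<Rightarrow> real \<Rightarrow> real) \<Rightarrow> (real \<Rightarrow> real \<Rightarrow> real) \<Rightarrow> nat \<Rightarrow> real \<Rightarrow> real \<Rightarrow> nat \<Rightarrow> real" where
  "vx_tilde v u Nx dt t i =
     (cell_odd v Nx t (i+1) - cell_odd v Nx t (i-1)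
      + mesh_dx Nx / dt * (cell_even u Nx t (i+1) + cell_even u Nx t (i-1) - 2 * cell_even u Nx t i))
     / (2 * mesh_dx Nx)"

definition ux_tilde :: "(real \<Rightarrow> real \<Rightarrow> real) \<Rightarrow> (real \<Rightarrow> real \<Rightarrow> real) \<Rightarrow> nat \<Rightarrow> real \<Rightarrow> real \<Rightarrow> nat \<Rightarrow> real" where
  "ux_tilde v u Nx dt t i =
     (cell_even u Nx t (i+1) - cell_even u Nx t (i-1)
      + mesh_dx Nx / dt * (cell_odd v Nx t (i+1) + cell_odd v Nx t (i-1) - 2 * cell_odd v Nx t i))
     / (2 * mesh_dx Nx)"

text \<open>Index of the cell containing x \<in> [0,1] (the right end point is put into cell Nx).\<close>
definition cell_of :: "nat \<Rightarrow> real \<Rightarrow> nat" where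
  "cell_of Nx x = min Nx (nat \<lfloor>x * real Nx\<rfloor> + 1)"

definition L2_err :: "(real \<Rightarrow> real \<Rightarrow> real) \<Rightarrow> (real \<Rightarrow> real \<Rightarrow> real) \<Rightarrow> nat \<Rightarrow> real \<Rightarrow> real \<Rightarrow> real" where
  "L2_err v u Nx dt t = sqrt (integral {0..1} (\<lambda>x.
      (pdx v x t - vx_tilde v u Nx dt t (cell_of Nx x))\<^sup>2
    + (pdx u x t - ux_tilde v u Nx dt t (cell_of Nx x))\<^sup>2))"

end

theory Submission
  imports Defs
begin

text \<open>By (A1), \<open>u\<^sub>x\<^sub>x\<close> and \<open>u\<^sub>x\<^sub>t\<close> are \<open>O(\<epsilon>\<^sup>2)\<close>, and the second equation gives
  \<open>v\<^sub>x = \<epsilon>\<^sup>2 (u\<^sub>t - g)\<close>; hence \<open>v\<^sub>x\<close> and \<open>u\<^sub>x\<close> are Lipschitz in \<open>x\<close> with constant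
  \<open>O(\<epsilon>\<^sup>2)\<close>, uniformly on bounded time intervals. The ghost cells reflect \<open>v\<close> oddly and
  \<open>u\<close> evenly across the walls, which matches \<open>v = 0\<close> and \<open>u\<^sub>x = v\<^sub>t = 0\<close> there. A Taylor
  expansion with \<open>O(\<epsilon>\<^sup>2)\<close>-Lipschitz derivative then shows that each of the three cell values
  used on the cell of \<open>x\<close> lies within \<open>O(\<epsilon>\<^sup>2 \<Delta>x\<^sup>2)\<close> of the tangent line at \<open>x\<close>. So the
  central difference is within \<open>O(\<epsilon>\<^sup>2 \<Delta>x)\<close> of the derivative, and the correction
  \<open>\<Delta>x/\<Delta>t\<close> times a second difference is \<open>O(\<epsilon>\<^sup>2 \<Delta>x)\<close> because \<open>\<Delta>t = CFL \<Delta>x\<close>. The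
  pointwise bound integrates to the \<open>L\<^sup>2\<close> bound.\<close>

lemma lipschitz_on_real_derivative_bound:
  fixes f f' :: "real \<Rightarrow> real"
  assumes "convex S" "0 \<le> B"
    and deriv: "\<And>x. x \<in> S \<Longrightarrow> (f has_real_derivative f' x) (at x)"
    and bound: "\<And>x. x \<in> S \<Longrightarrow> \<bar>f' x\<bar> \<le> B"
  shows "B-lipschitz_on S f"
proof (rule lipschitz_onI)
  fix x y assume "x \<in> S" "y \<in> S"
  have "norm (f x - f y) \<le> B * norm (x - y)"
  proof (rule field_differentiable_bound[OF \<open>convex S\<close> _ _ \<open>x \<in> S\<close> \<open>y \<in> S\<close>])
    show "(f has_field_derivative f' z) (at z within S)" if "z \<in> S" for z
      using deriv[OF that] by (rule has_field_derivative_at_within)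
    show "norm (f' z) \<le> B" if "z \<in> S" for z
      using bound[OF that] by simp
  qed
  then show "dist (f x) (f y) \<le> B * dist x y"
    by (simp add: dist_norm)
qed (fact \<open>0 \<le> B\<close>)

lemma deriv_abs_le_of_right_increments:
  fixes \<phi> :: "real \<Rightarrow> real"
  assumes "(\<phi> has_real_derivative D) (at t)"
    and "\<And>s. 0 < s \<Longrightarrow> s \<le> 1 \<Longrightarrow> \<bar>\<phi> (t + s) - \<phi> t\<bar> \<le> c * s"
  shows "\<bar>D\<bar> \<le> c"
proof -
  have "((\<lambda>h. (\<phi> (t + h) - \<phi> t) / h) \<longlongrightarrow> D) (at_right 0)"
    using assms(1) by (simp add: DERIV_def filterlim_at_split)
  then have lim: "((\<lambda>h. \<bar>(\<phi> (t + h) - \<phi> t) / h\<bar>) \<longlongrightarrow> \<bar>D\<bar>) (at_right 0)"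
    by (rule tendsto_rabs)
  have "\<forall>\<^sub>F h in at_right 0. h \<in> {0<..<1::real}"
    by (rule eventually_at_right_real) simp
  then have "\<forall>\<^sub>F h in at_right 0. \<bar>(\<phi> (t + h) - \<phi> t) / h\<bar> \<le> c"
    by eventually_elim (use assms(2) in \<open>auto simp: abs_div pos_divide_le_eq\<close>)
  then show ?thesis
    using tendsto_upperbound[OF lim] by simp
qed

lemma lipschitz_deriv_taylor_bound:
  fixes F F' :: "real \<Rightarrow> real"
  assumes "convex S" "y \<in> S" "z \<in> S"
    and deriv: "\<And>x. (F has_real_derivative F' x) (at x)"
    and lip: "L-lipschitz_on S F'"
  shows "\<bar>F z - F y - F' y * (z - y)\<bar> \<le> L * (z - y)\<^sup>2"
proof -
  have seg: "closed_segment y z \<subseteq> S"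
    using assms(1-3) by (simp add: closed_segment_subset)
  have "norm ((F z - F' y * z) - (F y - F' y * y)) \<le> (L * \<bar>z - y\<bar>) * norm (z - y)"
  proof (rule field_differentiable_bound[OF convex_closed_segment])
    fix \<xi> assume \<xi>: "\<xi> \<in> closed_segment y z"
    show "((\<lambda>\<xi>. F \<xi> - F' y * \<xi>) has_field_derivative F' \<xi> - F' y) (at \<xi> within closed_segment y z)"
      using DERIV_diff[OF has_field_derivative_at_within[OF deriv] DERIV_cmult[OF DERIV_ident, of "F' y"]]
      by simp
    have "\<bar>F' \<xi> - F' y\<bar> \<le> L * \<bar>\<xi> - y\<bar>"
      using lipschitz_onD[OF lip, of \<xi> y] \<xi> seg \<open>y \<in> S\<close> by (auto simp: dist_real_def)
    also have "\<dots> \<le> L * \<bar>z - y\<bar>"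
      using dist_in_closed_segment[OF \<xi>] lipschitz_on_nonneg[OF lip]
      by (intro mult_left_mono) (auto simp: dist_real_def abs_minus_commute)
    finally show "norm (F' \<xi> - F' y) \<le> L * \<bar>z - y\<bar>"
      by simp
  qed simp_all
  then show ?thesis
    by (simp add: power2_eq_square algebra_simps)
qed

lemma C1fun_has_real_derivative_x:
  assumes "C1fun f"
  shows "((\<lambda>y. f y t) has_real_derivative pdx f x t) (at x)"
proof -
  have "((\<lambda>p. f (fst p) (snd p)) has_derivative (\<lambda>h. pdx f x t * fst h + pdt f x t * snd h)) (at (x, t))"
    using assms by (simp add: C1fun_def)
  moreover have "((\<lambda>y. (y, t)) has_derivative (\<lambda>h. (h, 0))) (at x)"
    by (intro derivative_eq_intros) auto
  ultimately have "((\<lambda>y. f y t) has_derivative (\<lambda>h. pdx f x t * h)) (at x)"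
    using diff_chain_at by (fastforce simp: o_def)
  then show ?thesis
    by (simp add: has_field_derivative_def)
qed

lemma C1fun_has_real_derivative_t:
  assumes "C1fun f"
  shows "((\<lambda>s. f x s) has_real_derivative pdt f x t) (at t)"
proof -
  have "((\<lambda>p. f (fst p) (snd p)) has_derivative (\<lambda>h. pdx f x t * fst h + pdt f x t * snd h)) (at (x, t))"
    using assms by (simp add: C1fun_def)
  moreover have "((\<lambda>s. (x, s)) has_derivative (\<lambda>h. (0, h))) (at t)"
    by (intro derivative_eq_intros) auto
  ultimately have "((\<lambda>s. f x s) has_derivative (\<lambda>h. pdt f x t * h)) (at t)"
    using diff_chain_at by (fastforce simp: o_def)
  then show ?thesis
    by (simp add: has_field_derivative_def)
qed

lemma pdx_diff_cmult:
  assumes "C1fun f" "C1fun g"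
  shows "pdx (\<lambda>x t. f x t - c * g x t) x t = pdx f x t - c * pdx g x t"
  unfolding pdx_def[of "\<lambda>x t. f x t - c * g x t"]
  by (intro DERIV_imp_deriv DERIV_diff DERIV_cmult C1fun_has_real_derivative_x assms)

lemma pdt_diff_cmult:
  assumes "C1fun f" "C1fun g"
  shows "pdt (\<lambda>x t. f x t - c * g x t) x t = pdt f x t - c * pdt g x t"
  unfolding pdt_def[of "\<lambda>x t. f x t - c * g x t"]
  by (intro DERIV_imp_deriv DERIV_diff DERIV_cmult C1fun_has_real_derivative_t assms)

lemma continuous_bounded_on_rectangle:
  fixes h :: "real \<Rightarrow> real \<Rightarrow> real"
  assumes "continuous_on UNIV (\<lambda>p. h (fst p) (snd p))"
  shows "\<exists>B \<ge> 0. \<forall>x \<in> {0..1}. \<forall>t \<in> {0..T}. \<bar>h x t\<bar> \<le> B"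
proof -
  have "compact ({0..1::real} \<times> {0..T})"
    by (intro compact_Times compact_Icc)
  then have "compact ((\<lambda>p. h (fst p) (snd p)) ` ({0..1} \<times> {0..T}))"
    by (intro compact_continuous_image continuous_on_subset[OF assms]) auto
  then obtain B where "\<forall>y \<in> (\<lambda>p. h (fst p) (snd p)) ` ({0..1} \<times> {0..T}). norm y \<le> B"
    by (meson bounded_iff compact_imp_bounded)
  then show ?thesis
    by (intro exI[of _ "\<bar>B\<bar>"]) force
qed

lemma C1norm_le_partials:
  assumes "C1norm_le f M" "(x, t) \<in> Dom"
  shows "\<bar>pdx f x t\<bar> \<le> M" "\<bar>pdt f x t\<bar> \<le> M"
proof -
  obtain A B where "A + B \<le> M" "\<bar>f x t\<bar> \<le> A" and grad: "sqrt ((pdx f x t)\<^sup>2 + (pdt f x t)\<^sup>2) \<le> B"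
    using assms unfolding C1norm_le_def by fastforce
  then have "sqrt ((pdx f x t)\<^sup>2 + (pdt f x t)\<^sup>2) \<le> M"
    by linarith
  moreover have "\<bar>pdx f x t\<bar> \<le> sqrt ((pdx f x t)\<^sup>2 + (pdt f x t)\<^sup>2)"
    "\<bar>pdt f x t\<bar> \<le> sqrt ((pdx f x t)\<^sup>2 + (pdt f x t)\<^sup>2)"
    by (simp_all add: real_le_rsqrt)
  ultimately show "\<bar>pdx f x t\<bar> \<le> M" "\<bar>pdt f x t\<bar> \<le> M"
    by linarith+
qed

lemma C1norm_le_scaled_partials:
  assumes "C1fun f" "C1fun g" and close: "C1norm_le (\<lambda>x t. f x t - e\<^sup>2 * g x t) (K * e ^ 3)"
    and e: "0 < e" "e < 1" and "(x, t) \<in> Dom"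
    and bound: "\<bar>pdx g x t\<bar> \<le> B" "\<bar>pdt g x t\<bar> \<le> B"
  shows "\<bar>pdx f x t\<bar> \<le> e\<^sup>2 * (B + \<bar>K\<bar>)" "\<bar>pdt f x t\<bar> \<le> e\<^sup>2 * (B + \<bar>K\<bar>)"
proof -
  have "K * e ^ 3 \<le> \<bar>K\<bar> * e ^ 3"
    using e by (intro mult_right_mono) auto
  also have "\<dots> \<le> \<bar>K\<bar> * e\<^sup>2"
    using e by (intro mult_left_mono power_decreasing) auto
  finally have Ke: "K * e ^ 3 \<le> e\<^sup>2 * \<bar>K\<bar>"
    by (simp add: mult.commute)
  have scaled: "\<bar>a\<bar> \<le> e\<^sup>2 * (B + \<bar>K\<bar>)" if "\<bar>a - e\<^sup>2 * b\<bar> \<le> K * e ^ 3" "\<bar>b\<bar> \<le> B" for a b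
  proof -
    have "\<bar>e\<^sup>2 * b\<bar> \<le> e\<^sup>2 * B"
      using that(2) by (simp add: abs_mult mult_left_mono)
    then show ?thesis
      using that(1) Ke by (simp add: distrib_left abs_le_iff)
  qed
  show "\<bar>pdx f x t\<bar> \<le> e\<^sup>2 * (B + \<bar>K\<bar>)"
    using scaled C1norm_le_partials(1)[OF close \<open>(x, t) \<in> Dom\<close>] bound(1)
    by (simp add: pdx_diff_cmult assms(1,2))
  show "\<bar>pdt f x t\<bar> \<le> e\<^sup>2 * (B + \<bar>K\<bar>)"
    using scaled C1norm_le_partials(2)[OF close \<open>(x, t) \<in> Dom\<close>] bound(2)
    by (simp add: pdt_diff_cmult assms(1,2))
qed

lemma pdt_eq_0_if_vanishing_after:
  assumes "C1fun f" "\<And>s. t \<le> s \<Longrightarrow> f x s = 0"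
  shows "pdt f x t = 0"
proof -
  have "\<bar>pdt f x t\<bar> \<le> 0"
    by (rule deriv_abs_le_of_right_increments[OF C1fun_has_real_derivative_t[OF assms(1)]])
       (simp add: assms(2))
  then show ?thesis
    by simp
qed

text \<open>Avoids the symmetry of second derivatives: \<open>f\<^sub>t(z,\<cdot>) - f\<^sub>t(y,\<cdot>)\<close> is controlled
  through the increments \<open>f(z,t+r) - f(y,t+r) - f(z,t) + f(y,t)\<close>, which are bounded
  via \<open>f\<^sub>x\<^sub>t\<close>.\<close>
lemma pdt_lipschitz_of_mixed_bound:
  assumes f: "C1fun f" "C1fun (pdx f)" and "0 \<le> M"
    and mixed: "\<And>\<zeta> \<tau>. \<zeta> \<in> {0..1} \<Longrightarrow> \<tau> \<in> {t..t+1} \<Longrightarrow> \<bar>pdt (pdx f) \<zeta> \<tau>\<bar> \<le> M"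
  shows "M-lipschitz_on {0..1} (\<lambda>x. pdt f x t)"
proof (rule lipschitz_onI)
  fix y z :: real assume yz: "y \<in> {0..1}" "z \<in> {0..1}"
  have "\<bar>pdt f z t - pdt f y t\<bar> \<le> M * \<bar>z - y\<bar>"
  proof (rule deriv_abs_le_of_right_increments)
    show "((\<lambda>s. f z s - f y s) has_real_derivative pdt f z t - pdt f y t) (at t)"
      by (intro DERIV_diff C1fun_has_real_derivative_t f)
    fix r :: real assume r: "0 < r" "r \<le> 1"
    have increment: "(M * r)-lipschitz_on {0..1} (\<lambda>\<zeta>. f \<zeta> (t + r) - f \<zeta> t)"
    proof (rule lipschitz_on_real_derivative_bound)
      show "((\<lambda>\<zeta>. f \<zeta> (t + r) - f \<zeta> t) has_real_derivative pdx f \<zeta> (t + r) - pdx f \<zeta> t) (at \<zeta>)"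
        for \<zeta> by (intro DERIV_diff C1fun_has_real_derivative_x f)
      fix \<zeta> :: real assume "\<zeta> \<in> {0..1}"
      have "M-lipschitz_on {t..t+1} (\<lambda>\<tau>. pdx f \<zeta> \<tau>)"
        using C1fun_has_real_derivative_t[OF f(2)] mixed[OF \<open>\<zeta> \<in> {0..1}\<close>] \<open>0 \<le> M\<close>
        by (intro lipschitz_on_real_derivative_bound) auto
      then show "\<bar>pdx f \<zeta> (t + r) - pdx f \<zeta> t\<bar> \<le> M * r"
        using lipschitz_onD[of M "{t..t+1}" "pdx f \<zeta>" "t + r" t] r by (simp add: dist_real_def)
    qed (use \<open>0 \<le> M\<close> r in auto)
    show "\<bar>(f z (t + r) - f y (t + r)) - (f z t - f y t)\<bar> \<le> M * \<bar>z - y\<bar> * r"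
      using lipschitz_onD[OF increment yz(2) yz(1)] by (simp add: dist_real_def algebra_simps)
  qed
  then show "dist (pdt f z t) (pdt f y t) \<le> M * dist z y"
    by (simp add: dist_real_def)
qed (fact \<open>0 \<le> M\<close>)

definition ghost_extend :: "real \<Rightarrow> (real \<Rightarrow> real) \<Rightarrow> nat \<Rightarrow> nat \<Rightarrow> real" where
  "ghost_extend s F Nx j =
     (if j = 0 then s * F (xbar Nx 1) else if Nx < j then s * F (xbar Nx Nx) else F (xbar Nx j))"

lemma cell_odd_eq_ghost_extend: "cell_odd f Nx t j = ghost_extend (-1) (\<lambda>y. f y t) Nx j"
  by (simp add: cell_odd_def ghost_extend_def)

lemma cell_even_eq_ghost_extend: "cell_even f Nx t j = ghost_extend 1 (\<lambda>y. f y t) Nx j"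
  by (simp add: cell_even_def ghost_extend_def)

text \<open>The ghost value \<open>s F(x\<^sub>b)\<close> stands for \<open>F\<close> at the mirror point \<open>2w - x\<^sub>b\<close>: an odd
  reflection needs \<open>F(w) = 0\<close>, an even one \<open>F'(w) = 0\<close>, and then both agree with the
  linear Taylor polynomial of \<open>F\<close> at \<open>w\<close> up to \<open>O(h\<^sup>2)\<close>.\<close>
lemma reflection_taylor_bound:
  fixes F F' :: "real \<Rightarrow> real"
  assumes deriv: "\<And>y. (F has_real_derivative F' y) (at y)"
    and lip: "L-lipschitz_on {0..1} F'"
    and pts: "w \<in> {0..1}" "xb \<in> {0..1}" "x \<in> {0..1}"
    and near: "\<bar>xb - w\<bar> \<le> h/2" "\<bar>x - w\<bar> \<le> h" "\<bar>(2*w - xb) - x\<bar> \<le> 3*h/2"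
    and parity: "(s = -1 \<and> F w = 0) \<or> (s = 1 \<and> F' w = 0)"
  shows "\<bar>s * F xb - F x - F' x * ((2*w - xb) - x)\<bar> \<le> 3 * L * h\<^sup>2"
proof -
  have L: "0 \<le> L"
    using lip by (rule lipschitz_on_nonneg)
  have "0 \<le> h"
    using near(1) abs_ge_zero[of "xb - w"] by linarith
  define R1 where "R1 = F xb - F w - F' w * (xb - w)"
  define R2 where "R2 = F x - F w - F' w * (x - w)"
  define D where "D = F' x - F' w"
  have "\<bar>R1\<bar> \<le> L * (xb - w)\<^sup>2"
    unfolding R1_def using pts by (intro lipschitz_deriv_taylor_bound[OF _ _ _ deriv lip]) auto
  also have "\<dots> \<le> L * (h/2)\<^sup>2"
    using near(1) L by (intro mult_left_mono) (auto simp: abs_le_square_iff[symmetric])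
  finally have R1: "\<bar>R1\<bar> \<le> L * h\<^sup>2 / 4"
    by (simp add: power_divide)
  have "\<bar>R2\<bar> \<le> L * (x - w)\<^sup>2"
    unfolding R2_def using pts by (intro lipschitz_deriv_taylor_bound[OF _ _ _ deriv lip]) auto
  also have "\<dots> \<le> L * h\<^sup>2"
    using near(2) L by (intro mult_left_mono) (auto simp: abs_le_square_iff[symmetric])
  finally have R2: "\<bar>R2\<bar> \<le> L * h\<^sup>2" .
  have "\<bar>D\<bar> \<le> L * h"
    using lipschitz_onD[OF lip, of x w] pts near(2) L
    by (auto simp: D_def dist_real_def intro: order_trans[OF _ mult_left_mono])
  then have "\<bar>D * ((2*w - xb) - x)\<bar> \<le> (L * h) * (3*h/2)"
    unfolding abs_mult using near(3) by (rule mult_mono) (use \<open>0 \<le> h\<close> L in auto)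
  then have D: "\<bar>D * ((2*w - xb) - x)\<bar> \<le> 3/2 * L * h\<^sup>2"
    by (simp add: power2_eq_square)
  have "s * F xb - F x - F' x * ((2*w - xb) - x) = s * R1 - R2 - D * ((2*w - xb) - x)"
    using parity by (auto simp: R1_def R2_def D_def algebra_simps)
  moreover have "\<bar>s * R1\<bar> = \<bar>R1\<bar>"
    using parity by auto
  ultimately show ?thesis
    using R1 R2 D L by (simp add: abs_le_iff) linarith
qed

lemma ghost_extend_taylor_bound:
  fixes F F' :: "real \<Rightarrow> real"
  assumes deriv: "\<And>y. (F has_real_derivative F' y) (at y)"
    and lip: "L-lipschitz_on {0..1} F'"
    and Nx: "0 < Nx" and x: "x \<in> {0..1}" and j: "j \<le> Nx + 1"
    and near: "\<bar>xbar Nx j - x\<bar> \<le> 3 * mesh_dx Nx / 2"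
    and parity: "(s = -1 \<and> F 0 = 0 \<and> F 1 = 0) \<or> (s = 1 \<and> F' 0 = 0 \<and> F' 1 = 0)"
  shows "\<bar>ghost_extend s F Nx j - F x - F' x * (xbar Nx j - x)\<bar> \<le> 3 * L * (mesh_dx Nx)\<^sup>2"
proof -
  define h where "h = mesh_dx Nx"
  have h: "0 < h" "h \<le> 1" "real Nx * h = 1" "\<And>j. xbar Nx j = (real j - 1/2) * h"
    using Nx by (auto simp: h_def mesh_dx_def xbar_def)
  have L: "0 \<le> L"
    using lip by (rule lipschitz_on_nonneg)
  consider "j = 0" | "j = Nx + 1" | "1 \<le> j" "j \<le> Nx"
    using j by linarith
  then show ?thesis
  proof cases
    case 1
    have xb: "xbar Nx 1 = h/2" "xbar Nx j = 2*0 - xbar Nx 1"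
      using h(4) 1 by auto
    have "\<bar>s * F (xbar Nx 1) - F x - F' x * ((2*0 - xbar Nx 1) - x)\<bar> \<le> 3 * L * h\<^sup>2"
      by (rule reflection_taylor_bound[OF deriv lip]) (use h x near xb parity 1 in \<open>auto simp: h_def\<close>)
    then show ?thesis
      using 1 xb by (simp add: ghost_extend_def h_def)
  next
    case 2
    have xb: "xbar Nx Nx = 1 - h/2" "xbar Nx j = 2*1 - xbar Nx Nx"
      using h(3) h(4)[of Nx] h(4)[of "Nx+1"] 2 by (auto simp: algebra_simps)
    have "\<bar>s * F (xbar Nx Nx) - F x - F' x * ((2*1 - xbar Nx Nx) - x)\<bar> \<le> 3 * L * h\<^sup>2"
      by (rule reflection_taylor_bound[OF deriv lip]) (use h x near xb parity 2 in \<open>auto simp: h_def\<close>)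
    then show ?thesis
      using 2 xb by (simp add: ghost_extend_def h_def)
  next
    case 3
    have "(real j - 1/2) * h \<le> real Nx * h"
      using 3 h(1) by (intro mult_right_mono) auto
    then have xj: "xbar Nx j \<in> {0..1}"
      using 3 h by auto
    have "\<bar>F (xbar Nx j) - F x - F' x * (xbar Nx j - x)\<bar> \<le> L * (xbar Nx j - x)\<^sup>2"
      using xj x by (intro lipschitz_deriv_taylor_bound[OF _ _ _ deriv lip]) auto
    also have "\<dots> \<le> L * (3 * h / 2)\<^sup>2"
      using near L by (intro mult_left_mono) (auto simp: h_def abs_le_square_iff[symmetric])
    also have "\<dots> \<le> 3 * L * h\<^sup>2"
      using L by (simp add: power2_eq_square algebra_simps)
    finally show ?thesis
      using 3 by (simp add: ghost_extend_def h_def)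
  qed
qed

lemma modified_central_difference_error:
  fixes a b :: "nat \<Rightarrow> real"
  assumes "1 \<le> i" "0 < h" "0 < cfl" "0 \<le> L"
    and X: "\<And>j. X j = (real j - 1/2) * h"
    and a: "\<And>j. j \<in> {i - 1, i, i + 1} \<Longrightarrow> \<bar>a j - A0 - A1 * (X j - x)\<bar> \<le> 3 * L * h\<^sup>2"
    and b: "\<And>j. j \<in> {i - 1, i, i + 1} \<Longrightarrow> \<bar>b j - B0 - B1 * (X j - x)\<bar> \<le> 3 * L * h\<^sup>2"
  shows "\<bar>(a (i+1) - a (i-1)) / (2*h) + (b (i+1) + b (i-1) - 2 * b i) / (2*cfl*h) - A1\<bar>
           \<le> L * h * (3 + 6/cfl)"
proof -
  define ra where "ra j = a j - A0 - A1 * (X j - x)" for j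
  define rb where "rb j = b j - B0 - B1 * (X j - x)" for j
  have Xp: "X (i+1) = X i + h" and Xm: "X (i-1) = X i - h"
    using X[of "i+1"] X[of i] X[of "i-1"] \<open>1 \<le> i\<close> by (simp_all add: of_nat_diff algebra_simps)
  have "(a (i+1) - a (i-1)) / (2*h) - A1 = (ra (i+1) - ra (i-1)) / (2*h)"
    unfolding ra_def Xp Xm using \<open>0 < h\<close> by (simp add: field_simps)
  moreover have "\<bar>ra (i+1) - ra (i-1)\<bar> \<le> 3 * L * h * (2*h)"
    using a[of "i+1"] a[of "i-1"] by (simp add: ra_def power2_eq_square)
  ultimately have central: "\<bar>(a (i+1) - a (i-1)) / (2*h) - A1\<bar> \<le> 3 * L * h"
    using \<open>0 < h\<close> by (simp add: abs_div pos_divide_le_eq)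
  have "b (i+1) + b (i-1) - 2 * b i = rb (i+1) + rb (i-1) - 2 * rb i"
    unfolding rb_def Xp Xm by (simp add: algebra_simps)
  moreover have "\<bar>rb (i+1) + rb (i-1) - 2 * rb i\<bar> \<le> 6 * L * h / cfl * (2*cfl*h)"
    using b[of "i+1"] b[of "i-1"] b[of i] \<open>0 < cfl\<close> by (simp add: rb_def power2_eq_square)
  ultimately have second: "\<bar>(b (i+1) + b (i-1) - 2 * b i) / (2*cfl*h)\<bar> \<le> 6 * L * h / cfl"
    using \<open>0 < h\<close> \<open>0 < cfl\<close> by (simp add: abs_div pos_divide_le_eq)
  have "L * h * (3 + 6/cfl) = 3 * L * h + 6 * L * h / cfl"
    by (simp add: algebra_simps add_divide_distrib)
  then show ?thesis
    using central second unfolding abs_le_iff by linarith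
qed

lemma cell_of_bounds:
  assumes Nx: "0 < Nx" and x: "x \<in> {0..1}"
  shows "1 \<le> cell_of Nx x \<and> cell_of Nx x \<le> Nx \<and> \<bar>xbar Nx (cell_of Nx x) - x\<bar> \<le> mesh_dx Nx / 2"
proof -
  define k where "k = \<lfloor>x * real Nx\<rfloor>"
  have k: "0 \<le> k" "real_of_int k \<le> x * real Nx" "x * real Nx < real_of_int k + 1"
    using x unfolding k_def by auto
  have N: "real Nx > 0"
    using Nx by simp
  show ?thesis
  proof (cases "nat k + 1 \<le> Nx")
    case True
    then have ci: "cell_of Nx x = nat k + 1"
      by (simp add: cell_of_def k_def)
    have "\<bar>(real_of_int k + 1/2) - x * real Nx\<bar> \<le> 1/2"
      using k by linarith
    then have "\<bar>(real_of_int k + 1/2) - x * real Nx\<bar> / real Nx \<le> (1/2) / real Nx"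
      using N by (intro divide_right_mono) auto
    moreover have "\<bar>(real_of_int k + 1/2) - x * real Nx\<bar> / real Nx = \<bar>xbar Nx (nat k + 1) - x\<bar>"
      using N k(1) by (simp add: xbar_def mesh_dx_def abs_div[symmetric] field_simps)
    ultimately show ?thesis
      using ci True by (simp add: mesh_dx_def)
  next
    case False
    then have ci: "cell_of Nx x = Nx"
      by (simp add: cell_of_def k_def)
    have "x * real Nx \<le> real Nx"
      using x by (simp add: mult_left_le_one_le)
    moreover have "real Nx \<le> real_of_int k"
      using False k(1) by linarith
    ultimately have "x * real Nx = real Nx"
      using k(2) by linarith
    then have "x = 1"
      using N by simp
    then show ?thesis
      using ci Nx by (simp add: xbar_def mesh_dx_def field_simps)
  qed
qed

lemma discrete_derivatives_error:
  fixes v u :: "real \<Rightarrow> real \<Rightarrow> real"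
  assumes C1: "C1fun v" "C1fun u" and Nx: "0 < Nx" and "0 < cfl"
    and lip_v: "L-lipschitz_on {0..1} (\<lambda>y. pdx v y t)"
    and lip_u: "L-lipschitz_on {0..1} (\<lambda>y. pdx u y t)"
    and wall_v: "v 0 t = 0" "v 1 t = 0" and wall_u: "pdx u 0 t = 0" "pdx u 1 t = 0"
    and x: "x \<in> {0..1}"
  shows "\<bar>pdx v x t - vx_tilde v u Nx (cfl * mesh_dx Nx) t (cell_of Nx x)\<bar> \<le> L * mesh_dx Nx * (3 + 6/cfl)
       \<and> \<bar>pdx u x t - ux_tilde v u Nx (cfl * mesh_dx Nx) t (cell_of Nx x)\<bar> \<le> L * mesh_dx Nx * (3 + 6/cfl)"
proof -
  define h where "h = mesh_dx Nx"
  define i where "i = cell_of Nx x"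
  define a where "a = ghost_extend (-1) (\<lambda>y. v y t) Nx"
  define b where "b = ghost_extend 1 (\<lambda>y. u y t) Nx"
  have h: "0 < h" "\<And>j. xbar Nx j = (real j - 1/2) * h"
    using Nx by (auto simp: h_def mesh_dx_def xbar_def)
  have i: "1 \<le> i" "i \<le> Nx" "\<bar>xbar Nx i - x\<bar> \<le> h/2"
    using cell_of_bounds[OF Nx x] by (auto simp: i_def h_def)
  have xbar_step: "xbar Nx (Suc i) = xbar Nx i + h" "xbar Nx (i - Suc 0) = xbar Nx i - h"
    using h(2)[of "Suc i"] h(2)[of i] h(2)[of "i - Suc 0"] i(1) by (simp_all add: of_nat_diff algebra_simps)
  have near: "j \<le> Nx + 1 \<and> \<bar>xbar Nx j - x\<bar> \<le> 3 * h / 2" if "j \<in> {i - 1, i, i + 1}" for j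
  proof -
    from that consider "j = i - 1" | "j = i" | "j = i + 1"
      by blast
    then show ?thesis
      unfolding abs_le_iff using i(1,2) i(3)[unfolded abs_le_iff] h(1) xbar_step by cases auto
  qed
  have L: "0 \<le> L"
    using lip_v by (rule lipschitz_on_nonneg)
  have a: "\<bar>a j - v x t - pdx v x t * (xbar Nx j - x)\<bar> \<le> 3 * L * h\<^sup>2" if "j \<in> {i - 1, i, i + 1}" for j
    unfolding a_def h_def
    by (rule ghost_extend_taylor_bound[OF C1fun_has_real_derivative_x[OF C1(1)] lip_v Nx x]) (use near[OF that] wall_v in \<open>simp_all add: h_def\<close>)
  have b: "\<bar>b j - u x t - pdx u x t * (xbar Nx j - x)\<bar> \<le> 3 * L * h\<^sup>2" if "j \<in> {i - 1, i, i + 1}" for j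
    unfolding b_def h_def
    by (rule ghost_extend_taylor_bound[OF C1fun_has_real_derivative_x[OF C1(2)] lip_u Nx x]) (use near[OF that] wall_u in \<open>simp_all add: h_def\<close>)
  have "vx_tilde v u Nx (cfl * h) t i = (a (i+1) - a (i-1)) / (2*h) + (b (i+1) + b (i-1) - 2 * b i) / (2*cfl*h)"
    unfolding vx_tilde_def a_def b_def cell_odd_eq_ghost_extend cell_even_eq_ghost_extend h_def[symmetric]
    using h(1) \<open>0 < cfl\<close> by (simp add: field_simps)
  moreover have "ux_tilde v u Nx (cfl * h) t i = (b (i+1) - b (i-1)) / (2*h) + (a (i+1) + a (i-1) - 2 * a i) / (2*cfl*h)"
    unfolding ux_tilde_def a_def b_def cell_odd_eq_ghost_extend cell_even_eq_ghost_extend h_def[symmetric]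
    using h(1) \<open>0 < cfl\<close> by (simp add: field_simps)
  ultimately show ?thesis
    using modified_central_difference_error[OF i(1) h(1) \<open>0 < cfl\<close> L h(2) a b]
      modified_central_difference_error[OF i(1) h(1) \<open>0 < cfl\<close> L h(2) b a]
    by (simp add: i_def h_def abs_minus_commute)
qed

lemma L2_err_le:
  assumes "0 \<le> E"
    and pointwise: "\<And>x. x \<in> {0..1} \<Longrightarrow>
      \<bar>pdx v x t - vx_tilde v u Nx dt t (cell_of Nx x)\<bar> \<le> E \<and>
      \<bar>pdx u x t - ux_tilde v u Nx dt t (cell_of Nx x)\<bar> \<le> E"
  shows "L2_err v u Nx dt t \<le> 2 * E"
proof -
  define f where "f x = (pdx v x t - vx_tilde v u Nx dt t (cell_of Nx x))\<^sup>2
                      + (pdx u x t - ux_tilde v u Nx dt t (cell_of Nx x))\<^sup>2" for x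
  have bound: "f x \<le> (2 * E)\<^sup>2" if "x \<in> {0..1}" for x
  proof -
    have "(pdx v x t - vx_tilde v u Nx dt t (cell_of Nx x))\<^sup>2 \<le> E\<^sup>2"
         "(pdx u x t - ux_tilde v u Nx dt t (cell_of Nx x))\<^sup>2 \<le> E\<^sup>2"
      using pointwise[OF that] \<open>0 \<le> E\<close> by (simp_all add: abs_le_square_iff[symmetric])
    moreover have "E\<^sup>2 + E\<^sup>2 \<le> (2 * E)\<^sup>2"
      by (simp add: power2_eq_square)
    ultimately show ?thesis
      unfolding f_def by linarith
  qed
  have "integral {0..1} f \<le> (2 * E)\<^sup>2"
  proof (cases "f integrable_on {0..1}")
    case True
    show ?thesis
      using integral_le[OF True Henstock_Kurzweil_Integration.integrable_const_ivl bound] by simp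
  qed (simp add: not_integrable_integral)
  then have "L2_err v u Nx dt t \<le> sqrt ((2 * E)\<^sup>2)"
    unfolding L2_err_def f_def[symmetric] by (rule real_sqrt_le_mono)
  also have "sqrt ((2 * E)\<^sup>2) = 2 * E"
    using \<open>0 \<le> E\<close> by (intro real_sqrt_unique) auto
  finally show ?thesis .
qed

lemma solution_pdx_lipschitz:
  fixes v u :: "real \<Rightarrow> real \<Rightarrow> real \<Rightarrow> real" and g u2 :: "real \<Rightarrow> real \<Rightarrow> real" and T :: real
  assumes smooth: "\<And>e. 0 < e \<Longrightarrow> e < 1 \<Longrightarrow> C2fun (v e) \<and> C2fun (u e)"
    and "C1fun g" "C2fun u2"
    and pde: "\<And>e x t. 0 < e \<Longrightarrow> e < 1 \<Longrightarrow> x \<in> {0..1} \<Longrightarrow> 0 \<le> t \<Longrightarrow>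
               pdt (u e) x t - pdx (v e) x t / e\<^sup>2 = g x t"
    and close: "\<And>e. 0 < e \<Longrightarrow> e < 1 \<Longrightarrow>
               C1norm_le (\<lambda>x t. pdx (u e) x t - e\<^sup>2 * pdx u2 x t) (K * e ^ 3)"
  shows "\<exists>L. \<forall>e t. 0 < e \<and> e < 1 \<and> t \<in> {0..T} \<longrightarrow>
           (e\<^sup>2 * L)-lipschitz_on {0..1} (\<lambda>x. pdx (v e) x t) \<and>
           (e\<^sup>2 * L)-lipschitz_on {0..1} (\<lambda>x. pdx (u e) x t)"
proof -
  have u2: "C1fun (pdx u2)"
    using \<open>C2fun u2\<close> by (simp add: C2fun_def)
  obtain Bx where "0 \<le> Bx" and Bx: "\<forall>x \<in> {0..1}. \<forall>t \<in> {0..T+1}. \<bar>pdx (pdx u2) x t\<bar> \<le> Bx"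
    using continuous_bounded_on_rectangle[of "pdx (pdx u2)" "T + 1"] u2 by (auto simp: C1fun_def)
  obtain Bt where "0 \<le> Bt" and Bt: "\<forall>x \<in> {0..1}. \<forall>t \<in> {0..T+1}. \<bar>pdt (pdx u2) x t\<bar> \<le> Bt"
    using continuous_bounded_on_rectangle[of "pdt (pdx u2)" "T + 1"] u2 by (auto simp: C1fun_def)
  obtain G where "0 \<le> G" and G: "\<forall>x \<in> {0..1}. \<forall>t \<in> {0..T}. \<bar>pdx g x t\<bar> \<le> G"
    using continuous_bounded_on_rectangle[of "pdx g" T] \<open>C1fun g\<close> by (auto simp: C1fun_def)
  define C where "C = Bx + Bt + \<bar>K\<bar>"
  have "0 \<le> C"
    using \<open>0 \<le> Bx\<close> \<open>0 \<le> Bt\<close> by (simp add: C_def)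
  have lip: "(e\<^sup>2 * (C + G))-lipschitz_on {0..1} (\<lambda>x. pdx (v e) x t) \<and>
             (e\<^sup>2 * (C + G))-lipschitz_on {0..1} (\<lambda>x. pdx (u e) x t)"
    if e: "0 < e" "e < 1" and t: "t \<in> {0..T}" for e t
  proof -
    have u: "C1fun (u e)" "C1fun (pdx (u e))"
      using smooth[OF e] by (auto simp: C2fun_def)
    have second: "\<bar>pdx (pdx (u e)) x \<tau>\<bar> \<le> e\<^sup>2 * C" "\<bar>pdt (pdx (u e)) x \<tau>\<bar> \<le> e\<^sup>2 * C"
      if "x \<in> {0..1}" "\<tau> \<in> {0..T+1}" for x \<tau>
    proof -
      have "\<bar>pdx (pdx u2) x \<tau>\<bar> \<le> Bx + Bt" "\<bar>pdt (pdx u2) x \<tau>\<bar> \<le> Bx + Bt"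
        using Bx Bt that \<open>0 \<le> Bx\<close> \<open>0 \<le> Bt\<close> by fastforce+
      then show "\<bar>pdx (pdx (u e)) x \<tau>\<bar> \<le> e\<^sup>2 * C" "\<bar>pdt (pdx (u e)) x \<tau>\<bar> \<le> e\<^sup>2 * C"
        using C1norm_le_scaled_partials[OF u(2) u2 close[OF e] e] that
        by (simp_all add: C_def Dom_def)
    qed
    have lip_ux: "(e\<^sup>2 * C)-lipschitz_on {0..1} (\<lambda>x. pdx (u e) x t)"
      by (rule lipschitz_on_real_derivative_bound[where f'="\<lambda>x. pdx (pdx (u e)) x t"])
         (use second(1) t \<open>0 \<le> C\<close> C1fun_has_real_derivative_x[OF u(2)] in auto)
    have lip_ut: "(e\<^sup>2 * C)-lipschitz_on {0..1} (\<lambda>x. pdt (u e) x t)"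
      using second(2) t \<open>0 \<le> C\<close> by (intro pdt_lipschitz_of_mixed_bound u) auto
    have lip_g: "G-lipschitz_on {0..1} (\<lambda>x. g x t)"
      by (rule lipschitz_on_real_derivative_bound[where f'="\<lambda>x. pdx g x t"])
         (use G t \<open>0 \<le> G\<close> C1fun_has_real_derivative_x[OF \<open>C1fun g\<close>] in auto)
    have "(e\<^sup>2 * (e\<^sup>2 * C + G))-lipschitz_on {0..1} (\<lambda>x. e\<^sup>2 * (pdt (u e) x t - g x t))"
      by (intro lipschitz_on_cmult_real_upper lipschitz_on_diff lip_ut lip_g) simp
    moreover have "pdx (v e) x t = e\<^sup>2 * (pdt (u e) x t - g x t)" if "x \<in> {0..1}" for x
      using pde[OF e that] t e by (simp add: field_simps)
    ultimately have "(e\<^sup>2 * (e\<^sup>2 * C + G))-lipschitz_on {0..1} (\<lambda>x. pdx (v e) x t)"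
      by (rule lipschitz_on_transform)
    moreover have "e\<^sup>2 * (e\<^sup>2 * C + G) \<le> e\<^sup>2 * (C + G)"
      using e \<open>0 \<le> C\<close> by (intro mult_left_mono add_right_mono mult_left_le_one_le) (auto simp: power_le_one)
    ultimately have "(e\<^sup>2 * (C + G))-lipschitz_on {0..1} (\<lambda>x. pdx (v e) x t)"
      by (rule lipschitz_on_le)
    moreover have "(e\<^sup>2 * (C + G))-lipschitz_on {0..1} (\<lambda>x. pdx (u e) x t)"
      by (rule lipschitz_on_le[OF lip_ux]) (simp add: \<open>0 \<le> G\<close> mult_left_mono)
    ultimately show ?thesis ..
  qed
  then show ?thesis
    by blast
qed

theorem lemma5:
  fixes v u :: "real \<Rightarrow> real \<Rightarrow> real \<Rightarrow> real"   \<comment> \<open>v \<epsilon> x t, u \<epsilon> x t\<close>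
    and g v2 u2 :: "real \<Rightarrow> real \<Rightarrow> real"
    and cfl :: real
  assumes smooth: "\<And>e. 0 < e \<Longrightarrow> e < 1 \<Longrightarrow> C2fun (v e) \<and> C2fun (u e)"
    and smooth_g: "C1fun g"
    and smooth_lim: "C2fun v2" "C2fun u2"
    and pde: "\<And>e x t. 0 < e \<Longrightarrow> e < 1 \<Longrightarrow> x \<in> {0..1} \<Longrightarrow> 0 \<le> t \<Longrightarrow>
               pdt (v e) x t - pdx (u e) x t = 0 \<and>
               pdt (u e) x t - pdx (v e) x t / e\<^sup>2 = g x t"
    and bc: "\<And>e t. 0 < e \<Longrightarrow> e < 1 \<Longrightarrow> 0 \<le> t \<Longrightarrow> v e 0 t = 0 \<and> v e 1 t = 0"
    and A1: "\<exists>K. \<forall>e. 0 < e \<and> e < 1 \<longrightarrow>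
               C1norm_le (\<lambda>x t. v e x t - e\<^sup>2 * v2 x t) (K * e ^ 3) \<and>
               C1norm_le (\<lambda>x t. pdx (u e) x t - e\<^sup>2 * pdx u2 x t) (K * e ^ 3)"
    and A2: "0 < cfl" "cfl < 1"
  shows "\<forall>T > 0. \<exists>C. \<forall>e Nx n. 0 < e \<and> e < 1 \<and> 0 < Nx \<and>
           real n * (cfl * mesh_dx Nx) \<le> T \<longrightarrow>
           L2_err (v e) (u e) Nx (cfl * mesh_dx Nx) (real n * (cfl * mesh_dx Nx))
             \<le> C * (e\<^sup>2 * mesh_dx Nx)"
proof (intro allI impI)
  fix T :: real
  obtain K where close: "\<And>e. 0 < e \<Longrightarrow> e < 1 \<Longrightarrow> C1norm_le (\<lambda>x t. pdx (u e) x t - e\<^sup>2 * pdx u2 x t) (K * e ^ 3)"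
    using A1 by blast
  obtain L where lip: "\<And>e t. 0 < e \<Longrightarrow> e < 1 \<Longrightarrow> t \<in> {0..T} \<Longrightarrow>
      (e\<^sup>2 * L)-lipschitz_on {0..1} (\<lambda>x. pdx (v e) x t) \<and> (e\<^sup>2 * L)-lipschitz_on {0..1} (\<lambda>x. pdx (u e) x t)"
    using solution_pdx_lipschitz[OF smooth smooth_g smooth_lim(2) conjunct2[OF pde] close, where T=T]
    by blast
  show "\<exists>C. \<forall>e Nx n. 0 < e \<and> e < 1 \<and> 0 < Nx \<and> real n * (cfl * mesh_dx Nx) \<le> T \<longrightarrow>
          L2_err (v e) (u e) Nx (cfl * mesh_dx Nx) (real n * (cfl * mesh_dx Nx)) \<le> C * (e\<^sup>2 * mesh_dx Nx)"
  proof (intro exI[of _ "2 * L * (3 + 6/cfl)"] allI impI, elim conjE)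
    fix e :: real and Nx n :: nat
    assume e: "0 < e" "e < 1" and Nx: "0 < Nx" and "real n * (cfl * mesh_dx Nx) \<le> T"
    define t where "t = real n * (cfl * mesh_dx Nx)"
    have t: "t \<in> {0..T}"
      using \<open>real n * (cfl * mesh_dx Nx) \<le> T\<close> A2(1) Nx by (simp add: t_def mesh_dx_def)
    have C1: "C1fun (v e)" "C1fun (u e)"
      using smooth[OF e] by (auto simp: C2fun_def)
    text \<open>\<open>u\<^sub>x = v\<^sub>t\<close> vanishes on the walls, where \<open>v\<close> does for all times.\<close>
    have wall: "pdx (u e) w t = 0" if "w \<in> {0, 1}" for w
      using pde[OF e, of w t] pdt_eq_0_if_vanishing_after[OF C1(1), of t w] bc[OF e] that t by auto
    have "L2_err (v e) (u e) Nx (cfl * mesh_dx Nx) t \<le> 2 * (e\<^sup>2 * L * mesh_dx Nx * (3 + 6/cfl))"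
    proof (rule L2_err_le)
      show "0 \<le> e\<^sup>2 * L * mesh_dx Nx * (3 + 6/cfl)"
        using lipschitz_on_nonneg[OF conjunct1[OF lip[OF e t]]] A2(1) Nx by (simp add: mesh_dx_def)
    qed (rule discrete_derivatives_error[OF C1 Nx A2(1)]; use lip[OF e t] bc[OF e] t wall in auto)
    then show "L2_err (v e) (u e) Nx (cfl * mesh_dx Nx) (real n * (cfl * mesh_dx Nx)) \<le> 2 * L * (3 + 6/cfl) * (e\<^sup>2 * mesh_dx Nx)"
      by (simp add: t_def algebra_simps)
  qed
qed

end
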